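(* Let $q_1,q_2$ be probability densities with respect to a base measure $\mu$ on a common support $\Omega$, with $q_1(\omega)>0$ and $q_2(\omega)>0$ for all $\omega\in\Omega$. Let $\tilde q_i=Z_i q_i$ ($i=1,2$), where $Z_i>0$ are the normalizing constants, and let $r=Z_1/Z_2$. Let $\pi\in(0,1)$ and let $0<C_1<C_2$ be constants with $r\in[C_1,C_2]$. For $\tilde r\in[C_1,C_2]$ define $$G_\pi(\tilde r)=1-\frac{1}{\pi}E_{q_1}\!\left[\left(\frac{\pi\tilde q_2(\omega)\tilde r}{(1-\pi)\tilde q_1(\omega)+\pi\tilde q_2(\omega)\tilde r}\right)^{2}\right]-\frac{1}{1-\pi}E_{q_2}\!\left[\left(\frac{(1-\pi)\tilde q_1(\omega)}{(1-\pi)\tilde q_1(\omega)+\pi\tilde q_2(\omega)\tilde r}\right)^{2}\right].$$ Then $H_\pi(q_1,q_2)\ge \sup_{\tilde r\in[C_1,C_2]}G_\pi(\tilde r)$, and $G_\pi(\tilde r)=H_\pi(q_1,q_2)$ if and only if $\tilde r=r$. Moreover, let $\{\omega_{1j}\}_{j=1}^{n_1}$ be i.i.d. from $q_1$ and $\{\omega_{2j}\}_{j=1}^{n_2}$ be i.i.d. from $q_2$, and let $\hat G_\pi(\tilde r)$ be the empirical version of $G_\pi(\tilde r)$ obtained by replacing $E_{q_1}$ by the sample average over $\{\omega_{1j}\}$ and $E_{q_2}$ by the sample average over $\{\omega_{2j}\}$. If $\hat r_\pi\in\arg\max_{\tilde r\in[C_1,C_2]}\hat G_\pi(\tilde r)$,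 then $\hat r_\pi\to r$ in probability and $\hat G_\pi(\hat r_\pi)\to H_\pi(q_1,q_2)$ in probability as $n_1,n_2\to\infty$.
   Context: The weighted harmonic divergence with weight $\pi\in(0,1)$ is $H_\pi(q_1,q_2)=1-\int_\Omega\left(\pi q_1(\omega)^{-1}+(1-\pi)q_2(\omega)^{-1}\right)^{-1}d\mu(\omega)$. It is the $f$-divergence $D_f(q_1,q_2)=\int_\Omega f(q_1/q_2)\,q_2\,d\mu$ with generator $f(u)=1-\frac{u}{\pi+(1-\pi)u}$. Only the unnormalized densities $\tilde q_1,\tilde q_2$ are assumed evaluable. *)

theory Defs
  imports "HOL-Probability.Probability"
begin

definition harmonic_div :: "'a measure \<Rightarrow> real \<Rightarrow> ('a \<Rightarrow> real) \<Rightarrow> ('a \<Rightarrow> real) \<Rightarrow> real" where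
  "harmonic_div M p q1 q2 =
     1 - (\<integral>\<omega>. inverse (p * inverse (q1 \<omega>) + (1 - p) * inverse (q2 \<omega>)) \<partial>M)"

definition hterm1 :: "real \<Rightarrow> ('a \<Rightarrow> real) \<Rightarrow> ('a \<Rightarrow> real) \<Rightarrow> real \<Rightarrow> 'a \<Rightarrow> real" where
  "hterm1 p qt1 qt2 rt \<omega> =
     ((p * qt2 \<omega> * rt) / ((1 - p) * qt1 \<omega> + p * qt2 \<omega> * rt))\<^sup>2"

definition hterm2 :: "real \<Rightarrow> ('a \<Rightarrow> real) \<Rightarrow> ('a \<Rightarrow> real) \<Rightarrow> real \<Rightarrow> 'a \<Rightarrow> real" where
  "hterm2 p qt1 qt2 rt \<omega> =
     (((1 - p) * qt1 \<omega>) / ((1 - p) * qt1 \<omega> + p * qt2 \<omega> * rt))\<^sup>2"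

definition G_pi :: "'a measure \<Rightarrow> real \<Rightarrow> ('a \<Rightarrow> real) \<Rightarrow> ('a \<Rightarrow> real) \<Rightarrow>
    ('a \<Rightarrow> real) \<Rightarrow> ('a \<Rightarrow> real) \<Rightarrow> real \<Rightarrow> real" where
  "G_pi M p q1 q2 qt1 qt2 rt =
     1 - (1 / p) * (\<integral>\<omega>. q1 \<omega> * hterm1 p qt1 qt2 rt \<omega> \<partial>M)
       - (1 / (1 - p)) * (\<integral>\<omega>. q2 \<omega> * hterm2 p qt1 qt2 rt \<omega> \<partial>M)"

definition Ghat_pi :: "real \<Rightarrow> ('a \<Rightarrow> real) \<Rightarrow> ('a \<Rightarrow> real) \<Rightarrow>
    nat \<Rightarrow> (nat \<Rightarrow> 'a) \<Rightarrow> nat \<Rightarrow> (nat \<Rightarrow> 'a) \<Rightarrow> real \<Rightarrow> real" where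
  "Ghat_pi p qt1 qt2 n1 xs1 n2 xs2 rt =
     1 - (1 / p) * ((\<Sum>j<n1. hterm1 p qt1 qt2 rt (xs1 j)) / real n1)
       - (1 / (1 - p)) * ((\<Sum>j<n2. hterm2 p qt1 qt2 rt (xs2 j)) / real n2)"

end

theory Submission
  imports Defs "HOL-Probability.Hoeffding" "HOL-Real_Asymp.Real_Asymp"
begin

text \<open>
  Pointwise, \<open>q1 hterm1 / p + q2 hterm2 / (1 - p)\<close> exceeds the weighted harmonic mean of
  \<open>q1\<close> and \<open>q2\<close> by a nonnegative multiple of \<open>(Z2 rt - Z1)\<^sup>2\<close>, which is strictly positive
  wherever the densities are. Integrating gives \<open>G_pi rt \<le> H_pi\<close> with equality exactly at
  \<open>rt = Z1 / Z2\<close>.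

  The integrands take values in \<open>[0, 1]\<close> and are
  Lipschitz in \<open>rt \<ge> C1\<close>, so Hoeffding's inequality at the points of a finite net of
  \<open>[C1, C2]\<close> makes the empirical criterion uniformly close to \<open>G_pi\<close> outside events of
  vanishing probability. Since \<open>G_pi\<close> is continuous on the compact interval with a unique
  maximiser, every maximiser of a uniformly close function lies near it and attains nearly
  the maximal value \<open>H_pi\<close>.
\<close>

lemma approximate_maximiser_close:
  fixes G :: "'a::metric_space \<Rightarrow> real"
  assumes "compact K" "continuous_on K G" "r \<in> K"
    and unique: "\<And>t. t \<in> K \<Longrightarrow> t \<noteq> r \<Longrightarrow> G t < G r"
    and "\<epsilon> > 0"
  obtains \<tau> where "\<tau> > 0"
    "\<And>Gh t. t \<in> K \<Longrightarrow> (\<And>s. s \<in> K \<Longrightarrow> Gh s \<le> Gh t) \<Longrightarrow> (\<And>s. s \<in> K \<Longrightarrow> \<bar>Gh s - G s\<bar> \<le> \<tau>) \<Longrightarrow>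
       dist t r < \<epsilon> \<and> \<bar>Gh t - G r\<bar> \<le> \<epsilon>"
proof -
  define F where "F = K \<inter> {t. \<epsilon> \<le> dist t r}"
  obtain \<gamma> where \<gamma>: "\<gamma> > 0" "\<And>t. t \<in> F \<Longrightarrow> G t \<le> G r - \<gamma>"
  proof (cases "F = {}")
    case False
    have "compact F"
      unfolding F_def using \<open>compact K\<close>
      by (intro compact_Int_closed closed_Collect_le continuous_intros)
    then obtain m where m: "m \<in> F" "\<And>t. t \<in> F \<Longrightarrow> G t \<le> G m"
      using continuous_attains_sup[OF _ False continuous_on_subset[OF assms(2)]] F_def by auto
    have "m \<noteq> r"
      using m(1) \<open>\<epsilon> > 0\<close> unfolding F_def by auto
    then have "G m < G r"
      using m(1) unique unfolding F_def by blast
    with m show thesis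
      by (intro that[of "G r - G m"]) auto
  qed (use that[of 1] in auto)
  show thesis
  proof (rule that[of "min (\<gamma> / 3) \<epsilon>"])
    fix Gh t
    assume t: "t \<in> K" and max: "\<And>s. s \<in> K \<Longrightarrow> Gh s \<le> Gh t"
      and approx: "\<And>s. s \<in> K \<Longrightarrow> \<bar>Gh s - G s\<bar> \<le> min (\<gamma> / 3) \<epsilon>"
    have "G r - min (\<gamma> / 3) \<epsilon> \<le> Gh t"
      using max[OF \<open>r \<in> K\<close>] approx[OF \<open>r \<in> K\<close>] by linarith
    moreover have "Gh t \<le> G t + min (\<gamma> / 3) \<epsilon>"
      using approx[OF t] by linarith
    moreover have "G t \<le> G r"
      using unique[OF t] by (cases "t = r") auto
    moreover have "dist t r < \<epsilon>"
    proof (rule ccontr)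
      assume "\<not> dist t r < \<epsilon>"
      then have "G t \<le> G r - \<gamma>"
        using \<gamma>(2) t unfolding F_def by auto
      with calculation show False
        using \<gamma>(1) by linarith
    qed
    ultimately show "dist t r < \<epsilon> \<and> \<bar>Gh t - G r\<bar> \<le> \<epsilon>"
      by auto
  qed (use \<gamma>(1) \<open>\<epsilon> > 0\<close> in auto)
qed

lemma abs_power2_diff_le:
  fixes x y :: real
  assumes "x \<in> {0..1}" "y \<in> {0..1}"
  shows "\<bar>x\<^sup>2 - y\<^sup>2\<bar> \<le> 2 * \<bar>x - y\<bar>"
proof -
  have "\<bar>x\<^sup>2 - y\<^sup>2\<bar> = \<bar>x - y\<bar> * \<bar>x + y\<bar>"
    by (simp add: power2_eq_square algebra_simps flip: abs_mult)
  also have "\<dots> \<le> \<bar>x - y\<bar> * 2"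
    using assms by (intro mult_left_mono) auto
  finally show ?thesis by simp
qed

lemma abs_ratio_diff_le:
  fixes a b c u v :: real
  assumes "a > 0" "b > 0" "c > 0" "c \<le> u" "c \<le> v"
  shows "\<bar>b * u / (a + b * u) - b * v / (a + b * v)\<bar> \<le> \<bar>u - v\<bar> / c"
proof -
  have pos: "a + b * u > 0" "a + b * v > 0"
    using assms by (auto intro!: add_pos_pos)
  have "b * u / (a + b * u) - b * v / (a + b * v) = a * b * (u - v) / ((a + b * u) * (a + b * v))"
    using pos by (simp add: field_simps)
  moreover have "a * b * c \<le> (a + b * u) * (a + b * v)"
  proof -
    have "a * b * c \<le> a * (b * v)"
      using assms by simp
    also have "\<dots> \<le> (a + b * u) * (b * v)"
      using assms by (intro mult_right_mono) auto
    also have "\<dots> \<le> (a + b * u) * (a + b * v)"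
      using assms pos by (intro mult_left_mono) auto
    finally show ?thesis .
  qed
  then have "a * b * \<bar>u - v\<bar> / ((a + b * u) * (a + b * v)) \<le> a * b * \<bar>u - v\<bar> / (a * b * c)"
    using assms pos by (intro divide_left_mono) (auto intro!: mult_pos_pos)
  ultimately show ?thesis
    using assms pos by (simp add: abs_mult abs_divide)
qed

lemma abs_diff_affine_combinations_le:
  fixes u v a1 a2 b1 b2 :: real
  assumes "u \<ge> 0" "v \<ge> 0"
  shows "\<bar>(1 - u * a1 - v * a2) - (1 - u * b1 - v * b2)\<bar> \<le> u * \<bar>a1 - b1\<bar> + v * \<bar>a2 - b2\<bar>"
proof -
  have "\<bar>(1 - u * a1 - v * a2) - (1 - u * b1 - v * b2)\<bar> = \<bar>u * (b1 - a1) + v * (b2 - a2)\<bar>"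
    by (simp add: algebra_simps)
  also have "\<dots> \<le> \<bar>u * (b1 - a1)\<bar> + \<bar>v * (b2 - a2)\<bar>"
    by (rule abs_triangle_ineq)
  also have "\<dots> = u * \<bar>a1 - b1\<bar> + v * \<bar>a2 - b2\<bar>"
    using assms by (simp add: abs_mult abs_minus_commute)
  finally show ?thesis .
qed

text \<open>With \<open>c1 = Z1\<close> and \<open>c2 = Z2 rt\<close> the right-hand side vanishes exactly at
  \<open>rt = Z1 / Z2\<close>: this is where the unique maximiser of \<open>G_pi\<close> comes from.\<close>

lemma harmonic_mean_gap_eq:
  fixes q1 q2 c1 c2 p :: real
  assumes "q1 > 0" "q2 > 0" "c1 > 0" "c2 > 0" "0 < p" "p < 1"
  defines "D \<equiv> (1 - p) * (c1 * q1) + p * (c2 * q2)"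
  shows "q1 * (p * (c2 * q2) / D)\<^sup>2 / p + q2 * ((1 - p) * (c1 * q1) / D)\<^sup>2 / (1 - p)
           - inverse (p * inverse q1 + (1 - p) * inverse q2)
         = p * (1 - p) * q1\<^sup>2 * q2\<^sup>2 * (c2 - c1)\<^sup>2 / (D\<^sup>2 * (p * q2 + (1 - p) * q1))"
proof -
  have "D > 0" and A: "p * q2 + (1 - p) * q1 > 0"
    unfolding D_def using assms(1-6) by (auto intro!: add_pos_pos)
  have "q1 * (p * (c2 * q2) / D)\<^sup>2 / p + q2 * ((1 - p) * (c1 * q1) / D)\<^sup>2 / (1 - p)
      = (p * q1 * (c2 * q2)\<^sup>2 + (1 - p) * q2 * (c1 * q1)\<^sup>2) / D\<^sup>2"
    using \<open>D > 0\<close> assms(1-6) by (simp add: field_simps power2_eq_square)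
  moreover have "inverse (p * inverse q1 + (1 - p) * inverse q2) = q1 * q2 / (p * q2 + (1 - p) * q1)"
    using assms(1-6) A by (simp add: field_simps)
  moreover have "N / D\<^sup>2 - q1 * q2 / (p * q2 + (1 - p) * q1)
      = (N * (p * q2 + (1 - p) * q1) - q1 * q2 * D\<^sup>2) / (D\<^sup>2 * (p * q2 + (1 - p) * q1))" for N
    using \<open>D > 0\<close> A by (simp add: field_simps)
  moreover have "(p * q1 * (c2 * q2)\<^sup>2 + (1 - p) * q2 * (c1 * q1)\<^sup>2) * (p * q2 + (1 - p) * q1)
      - q1 * q2 * D\<^sup>2 = p * (1 - p) * q1\<^sup>2 * q2\<^sup>2 * (c2 - c1)\<^sup>2"
    unfolding D_def by (simp add: power2_eq_square algebra_simps)
  ultimately show ?thesis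
    by simp
qed

lemma
  fixes p rt :: real
  assumes "0 < p" "p < 1" "qt1 \<omega> > 0" "qt2 \<omega> > 0"
  defines "w \<equiv> p * qt2 \<omega> * rt / ((1 - p) * qt1 \<omega> + p * qt2 \<omega> * rt)"
  shows hterm1_eq_weight: "hterm1 p qt1 qt2 rt \<omega> = w\<^sup>2"
    and hterm2_eq_weight: "rt > 0 \<Longrightarrow> hterm2 p qt1 qt2 rt \<omega> = (1 - w)\<^sup>2"
    and weight_mem_unit: "rt > 0 \<Longrightarrow> w \<in> {0..1}"
proof -
  show "hterm1 p qt1 qt2 rt \<omega> = w\<^sup>2"
    by (simp add: hterm1_def w_def)
  assume "rt > 0"
  then have D: "(1 - p) * qt1 \<omega> + p * qt2 \<omega> * rt > 0" "p * qt2 \<omega> * rt > 0"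
    using assms by (auto intro!: add_pos_pos)
  then show "hterm2 p qt1 qt2 rt \<omega> = (1 - w)\<^sup>2"
    by (simp add: hterm2_def w_def field_simps)
  show "w \<in> {0..1}"
    using D assms(1-3) unfolding w_def by (auto simp: divide_le_eq)
qed

lemma hterm_mem_unit:
  fixes p rt :: real
  assumes "0 < p" "p < 1" "qt1 \<omega> > 0" "qt2 \<omega> > 0" "rt > 0"
  shows "hterm1 p qt1 qt2 rt \<omega> \<in> {0..1}" "hterm2 p qt1 qt2 rt \<omega> \<in> {0..1}"
  using weight_mem_unit[of p qt1 \<omega> qt2 rt, OF assms]
  by (simp_all add: hterm1_eq_weight[of p qt1 \<omega> qt2 rt, OF assms(1-4)]
      hterm2_eq_weight[of p qt1 \<omega> qt2 rt, OF assms] power_le_one)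

lemma hterm_lipschitz:
  fixes p rt s c :: real
  assumes "0 < p" "p < 1" "qt1 \<omega> > 0" "qt2 \<omega> > 0" "c > 0" "c \<le> rt" "c \<le> s"
  shows "\<bar>hterm1 p qt1 qt2 rt \<omega> - hterm1 p qt1 qt2 s \<omega>\<bar> \<le> 2 / c * \<bar>rt - s\<bar>"
    and "\<bar>hterm2 p qt1 qt2 rt \<omega> - hterm2 p qt1 qt2 s \<omega>\<bar> \<le> 2 / c * \<bar>rt - s\<bar>"
proof -
  define w where "w u = p * qt2 \<omega> * u / ((1 - p) * qt1 \<omega> + p * qt2 \<omega> * u)" for u
  have pos: "rt > 0" "s > 0"
    using assms by auto
  have w01: "w rt \<in> {0..1}" "w s \<in> {0..1}"
    using weight_mem_unit[of p qt1 \<omega> qt2, OF assms(1-4)] pos unfolding w_def by auto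
  have "\<bar>w rt - w s\<bar> \<le> \<bar>rt - s\<bar> / c"
    unfolding w_def using abs_ratio_diff_le[of "(1 - p) * qt1 \<omega>" "p * qt2 \<omega>" c rt s] assms
    by (simp add: mult.assoc)
  then have lip: "2 * \<bar>w rt - w s\<bar> \<le> 2 / c * \<bar>rt - s\<bar>"
    by simp
  show "\<bar>hterm1 p qt1 qt2 rt \<omega> - hterm1 p qt1 qt2 s \<omega>\<bar> \<le> 2 / c * \<bar>rt - s\<bar>"
    using abs_power2_diff_le[OF w01] lip
    by (simp add: hterm1_eq_weight[of p qt1 \<omega> qt2, OF assms(1-4)] w_def)
  have "\<bar>(1 - w rt) - (1 - w s)\<bar> = \<bar>w rt - w s\<bar>"
    by (simp add: abs_minus_commute)
  then have "\<bar>(1 - w rt)\<^sup>2 - (1 - w s)\<^sup>2\<bar> \<le> 2 * \<bar>w rt - w s\<bar>"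
    using abs_power2_diff_le[of "1 - w rt" "1 - w s"] w01 by simp
  then show "\<bar>hterm2 p qt1 qt2 rt \<omega> - hterm2 p qt1 qt2 s \<omega>\<bar> \<le> 2 / c * \<bar>rt - s\<bar>"
    using lip by (simp add: hterm2_eq_weight[of p qt1 \<omega> qt2, OF assms(1-4)] pos w_def)
qed

definition sample_mean :: "nat \<Rightarrow> ('a \<Rightarrow> real) \<Rightarrow> (nat \<Rightarrow> 'a) \<Rightarrow> real" where
  "sample_mean n f xs = (\<Sum>j<n. f (xs j)) / real n"

definition iid_sample ::
    "'p measure \<Rightarrow> 'a measure \<Rightarrow> ('a \<Rightarrow> real) \<Rightarrow> (nat \<Rightarrow> 'p \<Rightarrow> 'a) \<Rightarrow> bool" where
  "iid_sample P M q X \<longleftrightarrow> prob_space P \<and> (\<forall>j. X j \<in> measurable P M)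
     \<and> prob_space.indep_vars P (\<lambda>_. M) X UNIV
     \<and> (\<forall>j. distr P M (X j) = density M (\<lambda>\<omega>. ennreal (q \<omega>)))"

lemma Ghat_pi_eq_sample_means:
  "Ghat_pi p qt1 qt2 n1 xs1 n2 xs2 rt =
     1 - (1 / p) * sample_mean n1 (hterm1 p qt1 qt2 rt) xs1
       - (1 / (1 - p)) * sample_mean n2 (hterm2 p qt1 qt2 rt) xs2"
  by (simp add: Ghat_pi_def sample_mean_def)

lemma sample_mean_diff_le:
  assumes "c \<ge> 0" and "\<And>j. j < n \<Longrightarrow> \<bar>f (xs j) - g (xs j)\<bar> \<le> c"
  shows "\<bar>sample_mean n f xs - sample_mean n g xs\<bar> \<le> c"
proof (cases "n = 0")
  case False
  have "\<bar>sample_mean n f xs - sample_mean n g xs\<bar> = \<bar>\<Sum>j<n. f (xs j) - g (xs j)\<bar> / real n"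
    by (simp add: sample_mean_def sum_subtractf diff_divide_distrib[symmetric])
  also have "\<dots> \<le> (\<Sum>j<n. \<bar>f (xs j) - g (xs j)\<bar>) / real n"
    by (intro divide_right_mono sum_abs) simp
  also have "\<dots> \<le> (\<Sum>j<n. c) / real n"
    by (intro divide_right_mono sum_mono assms(2)) auto
  finally show ?thesis using False by simp
qed (simp add: sample_mean_def assms(1))

lemma integrable_density_mult_bounded:
  fixes q g :: "'a \<Rightarrow> real"
  assumes "integrable M q" "\<And>\<omega>. \<omega> \<in> space M \<Longrightarrow> q \<omega> \<ge> 0"
    and "g \<in> borel_measurable M" "\<And>\<omega>. \<omega> \<in> space M \<Longrightarrow> \<bar>g \<omega>\<bar> \<le> B"
  shows "integrable M (\<lambda>\<omega>. q \<omega> * g \<omega>)"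
proof (rule Bochner_Integration.integrable_bound[of _ "\<lambda>\<omega>. B * q \<omega>"])
  show "integrable M (\<lambda>\<omega>. B * q \<omega>)"
    using assms(1) by simp
  show "(\<lambda>\<omega>. q \<omega> * g \<omega>) \<in> borel_measurable M"
    using assms(1,3) by (simp add: borel_measurable_integrable)
  have "\<bar>q \<omega> * g \<omega>\<bar> \<le> \<bar>B * q \<omega>\<bar>" if "\<omega> \<in> space M" for \<omega>
    using assms(2,4)[OF that] by (simp add: abs_mult mult_left_mono mult.commute[of B])
  then show "AE \<omega> in M. norm (q \<omega> * g \<omega>) \<le> norm (B * q \<omega>)"
    by (intro AE_I2) simp
qed

lemma integral_density_diff_le:
  fixes q g h :: "'a \<Rightarrow> real"
  assumes q: "integrable M q" "\<And>\<omega>. \<omega> \<in> space M \<Longrightarrow> q \<omega> \<ge> 0" "(\<integral>\<omega>. q \<omega> \<partial>M) = 1"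
    and int: "integrable M (\<lambda>\<omega>. q \<omega> * g \<omega>)" "integrable M (\<lambda>\<omega>. q \<omega> * h \<omega>)"
    and diff: "\<And>\<omega>. \<omega> \<in> space M \<Longrightarrow> \<bar>g \<omega> - h \<omega>\<bar> \<le> c"
  shows "\<bar>(\<integral>\<omega>. q \<omega> * g \<omega> \<partial>M) - (\<integral>\<omega>. q \<omega> * h \<omega> \<partial>M)\<bar> \<le> c"
proof -
  have "\<bar>(\<integral>\<omega>. q \<omega> * g \<omega> \<partial>M) - (\<integral>\<omega>. q \<omega> * h \<omega> \<partial>M)\<bar> = \<bar>\<integral>\<omega>. q \<omega> * (g \<omega> - h \<omega>) \<partial>M\<bar>"
    using int by (simp add: right_diff_distrib)
  also have "\<dots> \<le> (\<integral>\<omega>. \<bar>q \<omega> * (g \<omega> - h \<omega>)\<bar> \<partial>M)"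
    by (rule integral_abs_bound)
  also have "\<dots> \<le> (\<integral>\<omega>. q \<omega> * c \<partial>M)"
  proof (rule integral_mono)
    show "integrable M (\<lambda>\<omega>. \<bar>q \<omega> * (g \<omega> - h \<omega>)\<bar>)"
      using int by (simp add: right_diff_distrib)
    show "\<bar>q \<omega> * (g \<omega> - h \<omega>)\<bar> \<le> q \<omega> * c" if "\<omega> \<in> space M" for \<omega>
      using q(2)[OF that] diff[OF that] by (simp add: abs_mult mult_left_mono)
  qed (use q(1) in simp)
  also have "\<dots> = c"
    using q(3) by simp
  finally show ?thesis .
qed

lemma
  fixes q :: "'a \<Rightarrow> real"
  assumes "q \<in> borel_measurable M" "\<And>\<omega>. \<omega> \<in> space M \<Longrightarrow> q \<omega> \<ge> 0"
    and "(\<integral>\<^sup>+\<omega>. ennreal (q \<omega>) \<partial>M) = 1"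
  shows integrable_probability_density: "integrable M q"
    and integral_probability_density: "(\<integral>\<omega>. q \<omega> \<partial>M) = 1"
  using assms integral_eq_nn_integral[of q M] by (auto intro!: integrableI_nonneg AE_I2)

lemma sample_mean_deviation_Hoeffding:
  fixes X :: "nat \<Rightarrow> 'p \<Rightarrow> 'a" and q f :: "'a \<Rightarrow> real"
  assumes X: "iid_sample P M q X"
    and q: "q \<in> borel_measurable M" "\<And>\<omega>. \<omega> \<in> space M \<Longrightarrow> q \<omega> \<ge> 0"
    and f: "f \<in> borel_measurable M" "\<And>\<omega>. \<omega> \<in> space M \<Longrightarrow> f \<omega> \<in> {a..b}"
    and "a < b" "\<eta> \<ge> 0" "n > 0"
  shows "measure P {x \<in> space P. \<eta> \<le> \<bar>sample_mean n f (\<lambda>j. X j x) - (\<integral>\<omega>. q \<omega> * f \<omega> \<partial>M)\<bar>}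
           \<le> 2 * exp (-2 * real n * \<eta>\<^sup>2 / (b - a)\<^sup>2)"
proof -
  interpret prob_space P using X by (simp add: iid_sample_def)
  have X_meas: "X j \<in> measurable P M" for j
    using X by (simp add: iid_sample_def)
  have fX_meas: "(\<lambda>x. f (X j x)) \<in> borel_measurable P" for j
    using measurable_compose[OF X_meas f(1)] by (simp add: comp_def)
  have X_distr: "distr P M (X j) = density M (\<lambda>\<omega>. ennreal (q \<omega>))" for j
    using X by (simp add: iid_sample_def)
  have mean: "expectation (\<lambda>x. f (X 0 x)) = (\<integral>\<omega>. q \<omega> * f \<omega> \<partial>M)"
  proof -
    have "expectation (\<lambda>x. f (X 0 x)) = integral\<^sup>L (distr P M (X 0)) f"
      by (rule integral_distr[symmetric, OF X_meas f(1)])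
    also have "\<dots> = (\<integral>\<omega>. q \<omega> * f \<omega> \<partial>M)"
      using q by (simp add: X_distr integral_density[OF f(1) q(1)] AE_I2)
    finally show ?thesis .
  qed
  have identically_distributed: "distr P borel (\<lambda>x. f (X i x)) = distr P borel (\<lambda>x. f (X 0 x))" for i
    using distr_distr[OF f(1) X_meas, of i] distr_distr[OF f(1) X_meas, of 0]
    by (simp add: comp_def X_distr)
  have "indep_vars (\<lambda>_. M) X UNIV"
    using X by (simp add: iid_sample_def)
  then have indep: "indep_vars (\<lambda>_. borel) (\<lambda>j x. f (X j x)) {..<n}"
    by (rule indep_vars_subset[OF indep_vars_compose2]) (use f(1) in auto)
  have AE_range: "AE x in P. f (X 0 x) \<in> {a..b}"
    using f(2) measurable_space[OF X_meas] by (intro AE_I2) auto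
  have "Hoeffding_ineq_iid P {..<n} (\<lambda>j x. f (X j x)) (\<lambda>x. f (X 0 x)) a b"
    unfolding Hoeffding_ineq_iid_def iid_interval_bounded_random_variables_def
      iid_interval_bounded_random_variables_axioms_def
    using prob_space_axioms indep identically_distributed AE_range fX_meas[of 0] by blast
  from Hoeffding_ineq_iid.Hoeffding_ineq_abs_ge'[OF this, of \<eta>]
  have "prob {x \<in> space P. \<eta> \<le> \<bar>(\<Sum>j\<in>{..<n}. f (X j x)) / real (card {..<n})
            - expectation (\<lambda>x. f (X 0 x))\<bar>}
        \<le> 2 * exp (-2 * real (card {..<n}) * \<eta>\<^sup>2 / (b - a)\<^sup>2)"
    using assms(6-8) by auto
  then show ?thesis
    by (simp add: mean sample_mean_def)
qed

lemma sample_mean_tendsto_in_probability: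
  fixes X :: "nat \<Rightarrow> 'p \<Rightarrow> 'a" and q f :: "'a \<Rightarrow> real"
  assumes X: "iid_sample P M q X"
    and q: "q \<in> borel_measurable M" "\<And>\<omega>. \<omega> \<in> space M \<Longrightarrow> q \<omega> \<ge> 0"
    and f: "f \<in> borel_measurable M" "\<And>\<omega>. \<omega> \<in> space M \<Longrightarrow> f \<omega> \<in> {a..b}"
    and "a < b" and "\<eta> > 0"
  shows "((\<lambda>n. measure P {x \<in> space P.
            \<eta> \<le> \<bar>sample_mean n f (\<lambda>j. X j x) - (\<integral>\<omega>. q \<omega> * f \<omega> \<partial>M)\<bar>}) \<longlongrightarrow> 0)
           sequentially"
proof -
  have "((\<lambda>n. 2 * exp (-2 * real n * \<eta>\<^sup>2 / (b - a)\<^sup>2)) \<longlongrightarrow> 0) sequentially"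
    using \<open>a < b\<close> \<open>\<eta> > 0\<close> by real_asymp
  then show ?thesis
  proof (rule tendsto_sandwich[OF _ _ tendsto_const, rotated 2])
    show "\<forall>\<^sub>F n in sequentially.
        measure P {x \<in> space P. \<eta> \<le> \<bar>sample_mean n f (\<lambda>j. X j x) - (\<integral>\<omega>. q \<omega> * f \<omega> \<partial>M)\<bar>}
          \<le> 2 * exp (-2 * real n * \<eta>\<^sup>2 / (b - a)\<^sup>2)"
      using eventually_gt_at_top[of 0] by eventually_elim
        (rule sample_mean_deviation_Hoeffding[OF assms(1-6) less_imp_le[OF \<open>\<eta> > 0\<close>]])
  qed simp
qed

lemma measure_UNION_tendsto_zero:
  assumes "finite_measure P" "finite S" "\<And>n s. s \<in> S \<Longrightarrow> A n s \<in> sets P"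
    and "\<And>s. s \<in> S \<Longrightarrow> ((\<lambda>n. measure P (A n s)) \<longlongrightarrow> 0) sequentially"
  shows "((\<lambda>n. measure P (\<Union>s\<in>S. A n s)) \<longlongrightarrow> 0) sequentially"
proof -
  interpret finite_measure P by fact
  have "((\<lambda>n. \<Sum>s\<in>S. measure P (A n s)) \<longlongrightarrow> 0) sequentially"
    using assms(4) by (rule tendsto_null_sum)
  then show ?thesis
  proof (rule tendsto_sandwich[OF _ _ tendsto_const, rotated 2])
    show "\<forall>\<^sub>F n in sequentially. measure P (\<Union>s\<in>S. A n s) \<le> (\<Sum>s\<in>S. measure P (A n s))"
      using assms(2,3) by (intro always_eventually allI measure_UNION_le) auto
  qed simp
qed

lemma uniform_sample_mean_deviation:
  fixes X :: "nat \<Rightarrow> 'p \<Rightarrow> 'a" and q :: "'a \<Rightarrow> real" and f :: "'b::metric_space \<Rightarrow> 'a \<Rightarrow> real"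
  assumes X: "iid_sample P M q X"
    and q: "q \<in> borel_measurable M" "\<And>\<omega>. \<omega> \<in> space M \<Longrightarrow> q \<omega> \<ge> 0"
      "(\<integral>\<^sup>+\<omega>. ennreal (q \<omega>) \<partial>M) = 1"
    and f_meas: "\<And>t. t \<in> K \<Longrightarrow> f t \<in> borel_measurable M"
    and f_unit: "\<And>t \<omega>. t \<in> K \<Longrightarrow> \<omega> \<in> space M \<Longrightarrow> f t \<omega> \<in> {0..1}"
    and f_lip: "\<And>t s \<omega>. t \<in> K \<Longrightarrow> s \<in> K \<Longrightarrow> \<omega> \<in> space M \<Longrightarrow> \<bar>f t \<omega> - f s \<omega>\<bar> \<le> L * dist t s"
    and "compact K" "L > 0" "\<tau> > 0"
  obtains B where "\<And>n. B n \<in> sets P" "((\<lambda>n. measure P (B n)) \<longlongrightarrow> 0) sequentially"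
    "\<And>n x t. x \<in> space P - B n \<Longrightarrow> t \<in> K \<Longrightarrow>
       \<bar>sample_mean n (f t) (\<lambda>j. X j x) - (\<integral>\<omega>. q \<omega> * f t \<omega> \<partial>M)\<bar> \<le> \<tau>"
proof -
  interpret prob_space P using X by (simp add: iid_sample_def)
  have X_meas[measurable]: "X j \<in> measurable P M" for j
    using X by (simp add: iid_sample_def)
  define E where "E t = (\<integral>\<omega>. q \<omega> * f t \<omega> \<partial>M)" for t
  define \<delta> where "\<delta> = \<tau> / (4 * L)"
  have "\<delta> > 0"
    using \<open>L > 0\<close> \<open>\<tau> > 0\<close> by (simp add: \<delta>_def)
  obtain S where S: "finite S" "S \<subseteq> K" "K \<subseteq> (\<Union>s\<in>S. ball s \<delta>)"
    using compactE_image[OF \<open>compact K\<close>, of K "\<lambda>s. ball s \<delta>"] \<open>\<delta> > 0\<close> by force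
  define B where "B n = (\<Union>s\<in>S. {x \<in> space P. \<tau> / 2 \<le> \<bar>sample_mean n (f s) (\<lambda>j. X j x) - E s\<bar>})" for n
  have level_meas: "{x \<in> space P. c \<le> \<bar>sample_mean n (f s) (\<lambda>j. X j x) - e\<bar>} \<in> sets P"
    if "s \<in> K" for c e n s
  proof -
    note [measurable] = f_meas[OF that]
    show ?thesis
      unfolding sample_mean_def by measurable
  qed
  have meas: "B n \<in> sets P" for n
    unfolding B_def using S by (intro sets.finite_UN level_meas) auto
  have lim: "((\<lambda>n. measure P (B n)) \<longlongrightarrow> 0) sequentially"
    unfolding B_def E_def using finite_measure S \<open>\<tau> > 0\<close> f_unit level_meas
    by (intro measure_UNION_tendsto_zero sample_mean_tendsto_in_probability[OF X q(1,2) f_meas, of _ 0 1]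
        level_meas) auto
  note q_int = integrable_probability_density[OF q] and q_one = integral_probability_density[OF q]
  have qf_int: "integrable M (\<lambda>\<omega>. q \<omega> * f t \<omega>)" if "t \<in> K" for t
    using f_unit[OF that] by (intro integrable_density_mult_bounded[OF q_int q(2) f_meas[OF that], of 1]) auto
  have close: "\<bar>sample_mean n (f t) (\<lambda>j. X j x) - E t\<bar> \<le> \<tau>"
    if x: "x \<in> space P - B n" and t: "t \<in> K" for n x t
  proof -
    obtain s where s: "s \<in> S" "dist s t < \<delta>"
      using S(3) t by force
    have sK: "s \<in> K" using S(2) s(1) by auto
    have "L * dist t s \<le> L * \<delta>"
      using s(2) \<open>L > 0\<close> by (simp add: dist_commute)
    then have lip: "\<bar>f t \<omega> - f s \<omega>\<bar> \<le> L * \<delta>" if "\<omega> \<in> space M" for \<omega>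
      using f_lip[OF t sK that] by linarith
    have "\<bar>sample_mean n (f t) (\<lambda>j. X j x) - sample_mean n (f s) (\<lambda>j. X j x)\<bar> \<le> L * \<delta>"
      using \<open>L > 0\<close> \<open>\<delta> > 0\<close> x lip measurable_space[OF X_meas] by (intro sample_mean_diff_le) auto
    moreover have "\<bar>sample_mean n (f s) (\<lambda>j. X j x) - E s\<bar> < \<tau> / 2"
      using x s(1) by (auto simp: B_def not_le)
    moreover have "\<bar>E t - E s\<bar> \<le> L * \<delta>"
      unfolding E_def by (rule integral_density_diff_le[OF q_int q(2) q_one qf_int[OF t] qf_int[OF sK] lip])
    moreover have "L * \<delta> = \<tau> / 4"
      using \<open>L > 0\<close> by (simp add: \<delta>_def)
    ultimately show ?thesis
      by linarith
  qed
  show thesis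
    using that[OF meas lim] close unfolding E_def by blast
qed

lemma measure_tendsto_zero_prod_filter:
  assumes "finite_measure P"
    and "\<And>m. A m \<in> sets P" "\<And>n. B n \<in> sets P"
    and "((\<lambda>m. measure P (A m)) \<longlongrightarrow> 0) sequentially"
    and "((\<lambda>n. measure P (B n)) \<longlongrightarrow> 0) sequentially"
    and "\<And>m n. T m n \<subseteq> A m \<union> B n"
  shows "((\<lambda>(m, n). measure P (T m n)) \<longlongrightarrow> 0) (sequentially \<times>\<^sub>F sequentially)"
proof -
  interpret finite_measure P by fact
  have bound: "measure P (T m n) \<le> measure P (A m) + measure P (B n)" for m n
  proof -
    have "measure P (T m n) \<le> measure P (A m \<union> B n)"
      using assms(2,3,6) by (intro finite_measure_mono) auto
    also have "\<dots> \<le> measure P (A m) + measure P (B n)"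
      using assms(2,3) by (rule measure_Un_le)
    finally show ?thesis .
  qed
  have "((\<lambda>x. measure P (A (fst x)) + measure P (B (snd x))) \<longlongrightarrow> 0 + 0) (sequentially \<times>\<^sub>F sequentially)"
    by (intro tendsto_add filterlim_compose[OF assms(4) filterlim_fst]
        filterlim_compose[OF assms(5) filterlim_snd])
  then have lim: "((\<lambda>x. measure P (A (fst x)) + measure P (B (snd x))) \<longlongrightarrow> 0) (sequentially \<times>\<^sub>F sequentially)"
    by simp
  show ?thesis
  proof (rule tendsto_sandwich[OF _ _ tendsto_const lim])
    show "\<forall>\<^sub>F x in sequentially \<times>\<^sub>F sequentially. 0 \<le> (\<lambda>(m, n). measure P (T m n)) x"
      by (simp add: case_prod_beta)
    show "\<forall>\<^sub>F x in sequentially \<times>\<^sub>F sequentially.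
        (\<lambda>(m, n). measure P (T m n)) x \<le> measure P (A (fst x)) + measure P (B (snd x))"
      by (intro always_eventually allI) (simp add: case_prod_beta bound)
  qed
qed

locale density_ratio_setting =
  fixes M :: "'a measure" and p Z1 Z2 :: real and q1 q2 qt1 qt2 :: "'a \<Rightarrow> real"
  assumes q1_meas [measurable]: "q1 \<in> borel_measurable M"
    and q2_meas [measurable]: "q2 \<in> borel_measurable M"
    and q1_pos: "\<And>\<omega>. \<omega> \<in> space M \<Longrightarrow> q1 \<omega> > 0"
    and q2_pos: "\<And>\<omega>. \<omega> \<in> space M \<Longrightarrow> q2 \<omega> > 0"
    and q1_norm: "(\<integral>\<^sup>+\<omega>. ennreal (q1 \<omega>) \<partial>M) = 1"
    and q2_norm: "(\<integral>\<^sup>+\<omega>. ennreal (q2 \<omega>) \<partial>M) = 1"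
    and Z1_pos: "Z1 > 0" and Z2_pos: "Z2 > 0"
    and qt1_eq: "\<And>\<omega>. \<omega> \<in> space M \<Longrightarrow> qt1 \<omega> = Z1 * q1 \<omega>"
    and qt2_eq: "\<And>\<omega>. \<omega> \<in> space M \<Longrightarrow> qt2 \<omega> = Z2 * q2 \<omega>"
    and p_pos: "0 < p" and p_less_1: "p < 1"
begin

abbreviation G :: "real \<Rightarrow> real" where
  "G \<equiv> G_pi M p q1 q2 qt1 qt2"

abbreviation H :: real where
  "H \<equiv> harmonic_div M p q1 q2"

definition harmonic_gap :: "real \<Rightarrow> 'a \<Rightarrow> real" where
  "harmonic_gap rt \<omega> = q1 \<omega> * hterm1 p qt1 qt2 rt \<omega> / p + q2 \<omega> * hterm2 p qt1 qt2 rt \<omega> / (1 - p)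
     - inverse (p * inverse (q1 \<omega>) + (1 - p) * inverse (q2 \<omega>))"

lemma qt1_pos: "\<omega> \<in> space M \<Longrightarrow> qt1 \<omega> > 0"
  using qt1_eq q1_pos Z1_pos by simp

lemma qt2_pos: "\<omega> \<in> space M \<Longrightarrow> qt2 \<omega> > 0"
  using qt2_eq q2_pos Z2_pos by simp

lemma qt_measurable [measurable]: "qt1 \<in> borel_measurable M" "qt2 \<in> borel_measurable M"
proof -
  have "(\<lambda>\<omega>. Z1 * q1 \<omega>) \<in> borel_measurable M" "(\<lambda>\<omega>. Z2 * q2 \<omega>) \<in> borel_measurable M"
    by measurable
  then show "qt1 \<in> borel_measurable M" "qt2 \<in> borel_measurable M"
    by (auto simp: qt1_eq qt2_eq cong: measurable_cong)
qed

lemma hterm_measurable [measurable]: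
  "hterm1 p qt1 qt2 rt \<in> borel_measurable M" "hterm2 p qt1 qt2 rt \<in> borel_measurable M"
  unfolding hterm1_def hterm2_def by measurable

lemma hterm_mem_unit_on_space:
  assumes "\<omega> \<in> space M" "rt > 0"
  shows "hterm1 p qt1 qt2 rt \<omega> \<in> {0..1}" "hterm2 p qt1 qt2 rt \<omega> \<in> {0..1}"
  using hterm_mem_unit[of p qt1 \<omega> qt2 rt] p_pos p_less_1 qt1_pos[OF assms(1)] qt2_pos[OF assms(1)] assms(2)
  by auto

lemma q_integrable: "integrable M q1" "integrable M q2"
  using q1_norm q2_norm q1_pos q2_pos
  by (auto intro!: integrable_probability_density less_imp_le)

lemma q_integral_eq_1: "(\<integral>\<omega>. q1 \<omega> \<partial>M) = 1" "(\<integral>\<omega>. q2 \<omega> \<partial>M) = 1"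
  using q1_norm q2_norm q1_pos q2_pos
  by (auto intro!: integral_probability_density less_imp_le)

lemma integrable_q_hterm:
  assumes "rt > 0"
  shows "integrable M (\<lambda>\<omega>. q1 \<omega> * hterm1 p qt1 qt2 rt \<omega>)"
    and "integrable M (\<lambda>\<omega>. q2 \<omega> * hterm2 p qt1 qt2 rt \<omega>)"
  using q1_pos q2_pos hterm_mem_unit_on_space[OF _ assms]
  by (auto simp: abs_le_iff less_imp_le
      intro!: integrable_density_mult_bounded[OF q_integrable(1) _ hterm_measurable(1), of _ 1]
        integrable_density_mult_bounded[OF q_integrable(2) _ hterm_measurable(2), of _ 1])

lemma integrable_harmonic_mean:
  "integrable M (\<lambda>\<omega>. inverse (p * inverse (q1 \<omega>) + (1 - p) * inverse (q2 \<omega>)))"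
proof (rule Bochner_Integration.integrable_bound[OF integrable_divide[OF q_integrable(1), of p]])
  show "AE \<omega> in M. norm (inverse (p * inverse (q1 \<omega>) + (1 - p) * inverse (q2 \<omega>))) \<le> norm (q1 \<omega> / p)"
  proof (rule AE_I2)
    fix \<omega> assume \<omega>: "\<omega> \<in> space M"
    have pos: "0 < p * inverse (q1 \<omega>)" "0 < (1 - p) * inverse (q2 \<omega>)"
      using p_pos p_less_1 q1_pos[OF \<omega>] q2_pos[OF \<omega>] by auto
    then have "inverse (p * inverse (q1 \<omega>) + (1 - p) * inverse (q2 \<omega>)) \<le> inverse (p * inverse (q1 \<omega>))"
      by (intro le_imp_inverse_le) auto
    also have "\<dots> = q1 \<omega> / p"
      by (simp add: divide_inverse mult.commute)
    finally have "inverse (p * inverse (q1 \<omega>) + (1 - p) * inverse (q2 \<omega>)) \<le> q1 \<omega> / p" .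
    moreover have "0 < inverse (p * inverse (q1 \<omega>) + (1 - p) * inverse (q2 \<omega>))" "0 < q1 \<omega> / p"
      using add_pos_pos[OF pos] q1_pos[OF \<omega>] p_pos by simp_all
    ultimately show "norm (inverse (p * inverse (q1 \<omega>) + (1 - p) * inverse (q2 \<omega>))) \<le> norm (q1 \<omega> / p)"
      by (metis abs_of_pos real_norm_def)
  qed
qed measurable

lemma harmonic_gap_eq:
  assumes "\<omega> \<in> space M" "rt > 0"
  defines "D \<equiv> (1 - p) * (Z1 * q1 \<omega>) + p * (Z2 * rt * q2 \<omega>)"
  shows "harmonic_gap rt \<omega> = p * (1 - p) * (q1 \<omega>)\<^sup>2 * (q2 \<omega>)\<^sup>2 * (Z2 * rt - Z1)\<^sup>2
           / (D\<^sup>2 * (p * q2 \<omega> + (1 - p) * q1 \<omega>))"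
  using harmonic_mean_gap_eq[of "q1 \<omega>" "q2 \<omega>" Z1 "Z2 * rt" p]
    q1_pos[OF assms(1)] q2_pos[OF assms(1)] Z1_pos Z2_pos p_pos p_less_1 assms(2)
  unfolding harmonic_gap_def hterm1_def hterm2_def D_def qt1_eq[OF assms(1)] qt2_eq[OF assms(1)]
  by (simp add: mult_ac)

lemma harmonic_gap_nonneg:
  assumes "\<omega> \<in> space M" "rt > 0"
  shows "harmonic_gap rt \<omega> \<ge> 0"
  unfolding harmonic_gap_eq[OF assms]
  using q1_pos[OF assms(1)] q2_pos[OF assms(1)] p_pos p_less_1
  by (intro divide_nonneg_nonneg mult_nonneg_nonneg) auto

lemma harmonic_gap_eq_0_iff:
  assumes "\<omega> \<in> space M" "rt > 0"
  shows "harmonic_gap rt \<omega> = 0 \<longleftrightarrow> rt = Z1 / Z2"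
proof -
  have "(1 - p) * (Z1 * q1 \<omega>) + p * (Z2 * rt * q2 \<omega>) > 0" "p * q2 \<omega> + (1 - p) * q1 \<omega> > 0"
    using q1_pos[OF assms(1)] q2_pos[OF assms(1)] p_pos p_less_1 Z1_pos Z2_pos assms(2)
    by (auto intro!: add_pos_pos)
  then have "harmonic_gap rt \<omega> = 0 \<longleftrightarrow> Z2 * rt - Z1 = 0"
    unfolding harmonic_gap_eq[OF assms]
    using q1_pos[OF assms(1)] q2_pos[OF assms(1)] p_pos p_less_1 by simp
  also have "\<dots> \<longleftrightarrow> rt = Z1 / Z2"
    using Z2_pos by (auto simp: field_simps)
  finally show ?thesis .
qed

lemma harmonic_div_minus_G_pi: "rt > 0 \<Longrightarrow> H - G rt = (\<integral>\<omega>. harmonic_gap rt \<omega> \<partial>M)"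
  using integrable_q_hterm[of rt] integrable_harmonic_mean
  by (simp add: harmonic_gap_def harmonic_div_def G_pi_def)

lemma G_pi_le_harmonic_div:
  assumes "rt > 0"
  shows "G rt \<le> H"
proof -
  have "0 \<le> (\<integral>\<omega>. harmonic_gap rt \<omega> \<partial>M)"
    using harmonic_gap_nonneg[OF _ assms] by (rule Bochner_Integration.integral_nonneg)
  then show ?thesis
    using harmonic_div_minus_G_pi[OF assms] by simp
qed

lemma G_pi_eq_harmonic_div_iff:
  assumes "rt > 0"
  shows "G rt = H \<longleftrightarrow> rt = Z1 / Z2"
proof
  assume "rt = Z1 / Z2"
  then have "(\<integral>\<omega>. harmonic_gap rt \<omega> \<partial>M) = (\<integral>\<omega>. 0 \<partial>M)"
    using assms by (intro Bochner_Integration.integral_cong) (auto simp: harmonic_gap_eq_0_iff)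
  then show "G rt = H"
    using harmonic_div_minus_G_pi[OF assms] by simp
next
  assume "G rt = H"
  show "rt = Z1 / Z2"
  proof (rule ccontr)
    assume ne: "rt \<noteq> Z1 / Z2"
    have "integrable M (harmonic_gap rt)"
      using integrable_q_hterm[OF assms] integrable_harmonic_mean
      unfolding harmonic_gap_def by auto
    moreover have "AE \<omega> in M. 0 \<le> harmonic_gap rt \<omega>"
      using assms by (intro AE_I2 harmonic_gap_nonneg)
    moreover have "(\<integral>\<omega>. harmonic_gap rt \<omega> \<partial>M) = 0"
      using harmonic_div_minus_G_pi[OF assms] \<open>G rt = H\<close> by simp
    ultimately have "AE \<omega> in M. harmonic_gap rt \<omega> = 0"
      using integral_nonneg_eq_0_iff_AE by blast
    then have "AE \<omega> in M. False"
      by (rule AE_mp) (use harmonic_gap_eq_0_iff[OF _ assms] ne in \<open>auto intro!: AE_I2\<close>)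
    then have "AE \<omega> in M. ennreal (q1 \<omega>) = 0"
      by (rule AE_mp) (rule AE_I2, simp)
    then have "(\<integral>\<^sup>+\<omega>. ennreal (q1 \<omega>) \<partial>M) = 0"
      by (simp add: nn_integral_0_iff_AE)
    then show False
      using q1_norm by simp
  qed
qed

lemma G_pi_lipschitz:
  assumes "c > 0" "c \<le> rt" "c \<le> s"
  shows "\<bar>G rt - G s\<bar> \<le> (1 / p + 1 / (1 - p)) * (2 / c * \<bar>rt - s\<bar>)"
proof -
  define E1 where "E1 rt = (\<integral>\<omega>. q1 \<omega> * hterm1 p qt1 qt2 rt \<omega> \<partial>M)" for rt
  define E2 where "E2 rt = (\<integral>\<omega>. q2 \<omega> * hterm2 p qt1 qt2 rt \<omega> \<partial>M)" for rt
  have pos: "rt > 0" "s > 0"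
    using assms by auto
  have lip: "\<bar>hterm1 p qt1 qt2 rt \<omega> - hterm1 p qt1 qt2 s \<omega>\<bar> \<le> 2 / c * \<bar>rt - s\<bar>"
    "\<bar>hterm2 p qt1 qt2 rt \<omega> - hterm2 p qt1 qt2 s \<omega>\<bar> \<le> 2 / c * \<bar>rt - s\<bar>"
    if "\<omega> \<in> space M" for \<omega>
    using hterm_lipschitz[of p qt1 \<omega> qt2 c rt s] p_pos p_less_1 qt1_pos[OF that] qt2_pos[OF that] assms
    by auto
  have E1_lip: "\<bar>E1 rt - E1 s\<bar> \<le> 2 / c * \<bar>rt - s\<bar>"
    unfolding E1_def by (rule integral_density_diff_le[OF q_integrable(1) _ q_integral_eq_1(1)
          integrable_q_hterm(1)[OF pos(1)] integrable_q_hterm(1)[OF pos(2)] lip(1)])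
       (use q1_pos in \<open>auto intro: less_imp_le\<close>)
  have E2_lip: "\<bar>E2 rt - E2 s\<bar> \<le> 2 / c * \<bar>rt - s\<bar>"
    unfolding E2_def by (rule integral_density_diff_le[OF q_integrable(2) _ q_integral_eq_1(2)
          integrable_q_hterm(2)[OF pos(1)] integrable_q_hterm(2)[OF pos(2)] lip(2)])
       (use q2_pos in \<open>auto intro: less_imp_le\<close>)
  have "\<bar>G rt - G s\<bar> \<le> 1 / p * \<bar>E1 rt - E1 s\<bar> + 1 / (1 - p) * \<bar>E2 rt - E2 s\<bar>"
    unfolding G_pi_def E1_def[symmetric] E2_def[symmetric]
    using p_pos p_less_1 by (intro abs_diff_affine_combinations_le) auto
  also have "\<dots> \<le> 1 / p * (2 / c * \<bar>rt - s\<bar>) + 1 / (1 - p) * (2 / c * \<bar>rt - s\<bar>)"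
    using E1_lip E2_lip p_pos p_less_1 by (intro add_mono mult_left_mono) auto
  finally show ?thesis
    by (simp only: distrib_right)
qed

lemma G_pi_continuous_on:
  assumes "C1 > 0"
  shows "continuous_on {C1..C2} G"
proof (rule lipschitz_on_continuous_on, rule lipschitz_onI)
  fix x y
  assume "x \<in> {C1..C2}" "y \<in> {C1..C2}"
  then show "dist (G x) (G y) \<le> (1 / p + 1 / (1 - p)) * (2 / C1) * dist x y"
    unfolding dist_real_def mult.assoc by (intro G_pi_lipschitz assms) auto
next
  show "0 \<le> (1 / p + 1 / (1 - p)) * (2 / C1)"
    using assms p_pos p_less_1 by (simp add: add_pos_pos)
qed


lemma Ghat_pi_uniformly_close:
  fixes X1 X2 :: "nat \<Rightarrow> 'p \<Rightarrow> 'a"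
  assumes X1: "iid_sample P M q1 X1" and X2: "iid_sample P M q2 X2"
    and C1: "0 < C1" and "\<tau> > 0"
  obtains B1 B2 where "\<And>n. B1 n \<in> sets P" "\<And>n. B2 n \<in> sets P"
    "((\<lambda>n. measure P (B1 n)) \<longlongrightarrow> 0) sequentially" "((\<lambda>n. measure P (B2 n)) \<longlongrightarrow> 0) sequentially"
    "\<And>n1 n2 x t. x \<in> space P - (B1 n1 \<union> B2 n2) \<Longrightarrow> t \<in> {C1..C2} \<Longrightarrow>
       \<bar>Ghat_pi p qt1 qt2 n1 (\<lambda>j. X1 j x) n2 (\<lambda>j. X2 j x) t - G t\<bar> \<le> \<tau>"
proof -
  have pos: "t > 0" if "t \<in> {C1..C2}" for t
    using C1 that by auto
  define \<kappa> where "\<kappa> = 1 / p + 1 / (1 - p)"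
  have "\<kappa> > 0"
    using p_pos p_less_1 by (simp add: \<kappa>_def add_pos_pos)
  have lip: "\<bar>hterm1 p qt1 qt2 t \<omega> - hterm1 p qt1 qt2 s \<omega>\<bar> \<le> 2 / C1 * dist t s"
    "\<bar>hterm2 p qt1 qt2 t \<omega> - hterm2 p qt1 qt2 s \<omega>\<bar> \<le> 2 / C1 * dist t s"
    if "t \<in> {C1..C2}" "s \<in> {C1..C2}" "\<omega> \<in> space M" for t s \<omega>
    using hterm_lipschitz[of p qt1 \<omega> qt2 C1 t s] p_pos p_less_1 qt1_pos[OF that(3)] qt2_pos[OF that(3)] C1 that
    by (auto simp: dist_real_def)
  obtain B1 where B1: "\<And>n. B1 n \<in> sets P" "((\<lambda>n. measure P (B1 n)) \<longlongrightarrow> 0) sequentially"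
    "\<And>n x t. x \<in> space P - B1 n \<Longrightarrow> t \<in> {C1..C2} \<Longrightarrow>
       \<bar>sample_mean n (hterm1 p qt1 qt2 t) (\<lambda>j. X1 j x) - (\<integral>\<omega>. q1 \<omega> * hterm1 p qt1 qt2 t \<omega> \<partial>M)\<bar> \<le> \<tau> / \<kappa>"
    using uniform_sample_mean_deviation[OF X1 q1_meas _ q1_norm, of "{C1..C2}" "hterm1 p qt1 qt2" "2 / C1" "\<tau> / \<kappa>"]
      q1_pos hterm_mem_unit_on_space(1)[OF _ pos] lip(1) C1 \<open>\<tau> > 0\<close> \<open>\<kappa> > 0\<close>
    by (auto intro: less_imp_le)
  obtain B2 where B2: "\<And>n. B2 n \<in> sets P" "((\<lambda>n. measure P (B2 n)) \<longlongrightarrow> 0) sequentially"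
    "\<And>n x t. x \<in> space P - B2 n \<Longrightarrow> t \<in> {C1..C2} \<Longrightarrow>
       \<bar>sample_mean n (hterm2 p qt1 qt2 t) (\<lambda>j. X2 j x) - (\<integral>\<omega>. q2 \<omega> * hterm2 p qt1 qt2 t \<omega> \<partial>M)\<bar> \<le> \<tau> / \<kappa>"
    using uniform_sample_mean_deviation[OF X2 q2_meas _ q2_norm, of "{C1..C2}" "hterm2 p qt1 qt2" "2 / C1" "\<tau> / \<kappa>"]
      q2_pos hterm_mem_unit_on_space(2)[OF _ pos] lip(2) C1 \<open>\<tau> > 0\<close> \<open>\<kappa> > 0\<close>
    by (auto intro: less_imp_le)
  show thesis
  proof (rule that[OF B1(1) B2(1) B1(2) B2(2)])
    fix n1 n2 x t
    assume x: "x \<in> space P - (B1 n1 \<union> B2 n2)" and t: "t \<in> {C1..C2}"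
    have "\<bar>Ghat_pi p qt1 qt2 n1 (\<lambda>j. X1 j x) n2 (\<lambda>j. X2 j x) t - G t\<bar>
        \<le> 1 / p * \<bar>sample_mean n1 (hterm1 p qt1 qt2 t) (\<lambda>j. X1 j x) - (\<integral>\<omega>. q1 \<omega> * hterm1 p qt1 qt2 t \<omega> \<partial>M)\<bar>
          + 1 / (1 - p) * \<bar>sample_mean n2 (hterm2 p qt1 qt2 t) (\<lambda>j. X2 j x) - (\<integral>\<omega>. q2 \<omega> * hterm2 p qt1 qt2 t \<omega> \<partial>M)\<bar>"
      unfolding Ghat_pi_eq_sample_means G_pi_def
      using p_pos p_less_1 by (intro abs_diff_affine_combinations_le) auto
    also have "\<dots> \<le> 1 / p * (\<tau> / \<kappa>) + 1 / (1 - p) * (\<tau> / \<kappa>)"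
      using B1(3)[of x n1 t] B2(3)[of x n2 t] x t p_pos p_less_1
      by (intro add_mono mult_left_mono) auto
    also have "\<dots> = \<tau>"
      using \<open>\<kappa> > 0\<close> by (simp add: \<kappa>_def field_simps)
    finally show "\<bar>Ghat_pi p qt1 qt2 n1 (\<lambda>j. X1 j x) n2 (\<lambda>j. X2 j x) t - G t\<bar> \<le> \<tau>" .
  qed
qed

lemma argmax_estimator_consistent:
  fixes X1 X2 :: "nat \<Rightarrow> 'p \<Rightarrow> 'a" and rhat :: "nat \<Rightarrow> nat \<Rightarrow> 'p \<Rightarrow> real"
  assumes X1: "iid_sample P M q1 X1" and X2: "iid_sample P M q2 X2"
    and C1: "0 < C1" and r: "Z1 / Z2 \<in> {C1..C2}"
    and rhat_range: "\<And>n1 n2 x. x \<in> space P \<Longrightarrow> rhat n1 n2 x \<in> {C1..C2}"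
    and rhat_argmax: "\<And>n1 n2 x rt. x \<in> space P \<Longrightarrow> rt \<in> {C1..C2} \<Longrightarrow>
        Ghat_pi p qt1 qt2 n1 (\<lambda>j. X1 j x) n2 (\<lambda>j. X2 j x) rt
          \<le> Ghat_pi p qt1 qt2 n1 (\<lambda>j. X1 j x) n2 (\<lambda>j. X2 j x) (rhat n1 n2 x)"
    and "\<epsilon> > 0"
  shows "((\<lambda>(n1, n2). measure P {x \<in> space P. \<epsilon> < \<bar>rhat n1 n2 x - Z1 / Z2\<bar>})
           \<longlongrightarrow> 0) (sequentially \<times>\<^sub>F sequentially)" (is ?estimator)
    and "((\<lambda>(n1, n2). measure P {x \<in> space P.
            \<epsilon> < \<bar>Ghat_pi p qt1 qt2 n1 (\<lambda>j. X1 j x) n2 (\<lambda>j. X2 j x) (rhat n1 n2 x) - H\<bar>})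
           \<longlongrightarrow> 0) (sequentially \<times>\<^sub>F sequentially)" (is ?maximum)
proof -
  have pos: "rt > 0" if "rt \<in> {C1..C2}" for rt
    using C1 that by auto
  have unique: "G rt < G (Z1 / Z2)" if "rt \<in> {C1..C2}" "rt \<noteq> Z1 / Z2" for rt
    using G_pi_le_harmonic_div[OF pos] G_pi_eq_harmonic_div_iff[OF pos] that r
    by (metis order_less_le)
  obtain \<tau> where "\<tau> > 0" and close: "\<And>Gh t. t \<in> {C1..C2} \<Longrightarrow> (\<And>s. s \<in> {C1..C2} \<Longrightarrow> Gh s \<le> Gh t) \<Longrightarrow>
      (\<And>s. s \<in> {C1..C2} \<Longrightarrow> \<bar>Gh s - G s\<bar> \<le> \<tau>) \<Longrightarrow>
      dist t (Z1 / Z2) < \<epsilon> \<and> \<bar>Gh t - G (Z1 / Z2)\<bar> \<le> \<epsilon>"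
    using approximate_maximiser_close[OF compact_Icc G_pi_continuous_on[OF C1] r unique \<open>\<epsilon> > 0\<close>]
    by blast
  obtain B1 B2 where B: "\<And>n. B1 n \<in> sets P" "\<And>n. B2 n \<in> sets P"
    "((\<lambda>n. measure P (B1 n)) \<longlongrightarrow> 0) sequentially" "((\<lambda>n. measure P (B2 n)) \<longlongrightarrow> 0) sequentially"
    and uniform: "\<And>n1 n2 x t. x \<in> space P - (B1 n1 \<union> B2 n2) \<Longrightarrow> t \<in> {C1..C2} \<Longrightarrow>
      \<bar>Ghat_pi p qt1 qt2 n1 (\<lambda>j. X1 j x) n2 (\<lambda>j. X2 j x) t - G t\<bar> \<le> \<tau>"
    using Ghat_pi_uniformly_close[OF X1 X2 C1 \<open>\<tau> > 0\<close>] by blast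
  have estimate: "\<bar>rhat n1 n2 x - Z1 / Z2\<bar> < \<epsilon>
      \<and> \<bar>Ghat_pi p qt1 qt2 n1 (\<lambda>j. X1 j x) n2 (\<lambda>j. X2 j x) (rhat n1 n2 x) - H\<bar> \<le> \<epsilon>"
    if "x \<in> space P - (B1 n1 \<union> B2 n2)" for n1 n2 x
  proof -
    have x: "x \<in> space P"
      using that by blast
    have "dist (rhat n1 n2 x) (Z1 / Z2) < \<epsilon> \<and>
        \<bar>Ghat_pi p qt1 qt2 n1 (\<lambda>j. X1 j x) n2 (\<lambda>j. X2 j x) (rhat n1 n2 x) - G (Z1 / Z2)\<bar> \<le> \<epsilon>"
      by (rule close[where Gh = "Ghat_pi p qt1 qt2 n1 (\<lambda>j. X1 j x) n2 (\<lambda>j. X2 j x)",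
            OF rhat_range[OF x] rhat_argmax[OF x] uniform[OF that]])
    then show ?thesis
      using G_pi_eq_harmonic_div_iff[OF pos[OF r]] by (simp add: dist_real_def)
  qed
  have "finite_measure P"
    using X1 by (simp add: iid_sample_def prob_space.finite_measure)
  show ?estimator ?maximum
    using estimate by (intro measure_tendsto_zero_prod_filter[OF \<open>finite_measure P\<close> B]; force)+
qed

end

theorem proposition1:
  fixes M :: "'a measure" and P :: "'p measure"
    and q1 q2 qt1 qt2 :: "'a \<Rightarrow> real"
    and Z1 Z2 p C1 C2 :: real
    and X1 X2 :: "nat \<Rightarrow> 'p \<Rightarrow> 'a"
    and rhat :: "nat \<Rightarrow> nat \<Rightarrow> 'p \<Rightarrow> real"
  assumes q1_meas: "q1 \<in> borel_measurable M" and q2_meas: "q2 \<in> borel_measurable M"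
    and q1_pos: "\<And>\<omega>. \<omega> \<in> space M \<Longrightarrow> q1 \<omega> > 0"
    and q2_pos: "\<And>\<omega>. \<omega> \<in> space M \<Longrightarrow> q2 \<omega> > 0"
    and q1_norm: "(\<integral>\<^sup>+\<omega>. ennreal (q1 \<omega>) \<partial>M) = 1"
    and q2_norm: "(\<integral>\<^sup>+\<omega>. ennreal (q2 \<omega>) \<partial>M) = 1"
    and Z1_pos: "Z1 > 0" and Z2_pos: "Z2 > 0"
    and qt1_def: "\<And>\<omega>. \<omega> \<in> space M \<Longrightarrow> qt1 \<omega> = Z1 * q1 \<omega>"
    and qt2_def: "\<And>\<omega>. \<omega> \<in> space M \<Longrightarrow> qt2 \<omega> = Z2 * q2 \<omega>"
    and p_range: "0 < p" "p < 1"
    and C_range: "0 < C1" "C1 < C2"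
    and r_range: "Z1 / Z2 \<in> {C1..C2}"
    and P_prob: "prob_space P"
    and X1_meas: "\<And>j. X1 j \<in> measurable P M"
    and X2_meas: "\<And>j. X2 j \<in> measurable P M"
    and X1_indep: "prob_space.indep_vars P (\<lambda>_. M) X1 UNIV"
    and X2_indep: "prob_space.indep_vars P (\<lambda>_. M) X2 UNIV"
    and X1_distr: "\<And>j. distr P M (X1 j) = density M (\<lambda>\<omega>. ennreal (q1 \<omega>))"
    and X2_distr: "\<And>j. distr P M (X2 j) = density M (\<lambda>\<omega>. ennreal (q2 \<omega>))"
    and rhat_meas: "\<And>n1 n2. rhat n1 n2 \<in> borel_measurable P"
    and rhat_range: "\<And>n1 n2 x. x \<in> space P \<Longrightarrow> rhat n1 n2 x \<in> {C1..C2}"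
    and rhat_argmax: "\<And>n1 n2 x rt. x \<in> space P \<Longrightarrow> rt \<in> {C1..C2} \<Longrightarrow>
        Ghat_pi p qt1 qt2 n1 (\<lambda>j. X1 j x) n2 (\<lambda>j. X2 j x) rt
          \<le> Ghat_pi p qt1 qt2 n1 (\<lambda>j. X1 j x) n2 (\<lambda>j. X2 j x) (rhat n1 n2 x)"
  shows "harmonic_div M p q1 q2 \<ge> (SUP rt\<in>{C1..C2}. G_pi M p q1 q2 qt1 qt2 rt)
    \<and> (\<forall>rt\<in>{C1..C2}. G_pi M p q1 q2 qt1 qt2 rt = harmonic_div M p q1 q2 \<longleftrightarrow> rt = Z1 / Z2)
    \<and> (\<forall>\<epsilon>>0. ((\<lambda>(n1, n2). measure P {x \<in> space P. \<epsilon> < \<bar>rhat n1 n2 x - Z1 / Z2\<bar>})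
                  \<longlongrightarrow> 0) (sequentially \<times>\<^sub>F sequentially))
    \<and> (\<forall>\<epsilon>>0. ((\<lambda>(n1, n2). measure P {x \<in> space P. \<epsilon> <
                  \<bar>Ghat_pi p qt1 qt2 n1 (\<lambda>j. X1 j x) n2 (\<lambda>j. X2 j x) (rhat n1 n2 x)
                     - harmonic_div M p q1 q2\<bar>})
                  \<longlongrightarrow> 0) (sequentially \<times>\<^sub>F sequentially))"
proof -
  interpret density_ratio_setting M p Z1 Z2 q1 q2 qt1 qt2
    by unfold_locales (use assms in auto)
  have pos: "rt > 0" if "rt \<in> {C1..C2}" for rt
    using C_range that by auto
  have iid: "iid_sample P M q1 X1" "iid_sample P M q2 X2"
    using P_prob X1_meas X2_meas X1_indep X2_indep X1_distr X2_distr by (auto simp: iid_sample_def)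
  have "H \<ge> (SUP rt\<in>{C1..C2}. G rt)"
    using G_pi_le_harmonic_div pos C_range by (intro cSUP_least) auto
  moreover have "\<forall>rt\<in>{C1..C2}. G rt = H \<longleftrightarrow> rt = Z1 / Z2"
    using G_pi_eq_harmonic_div_iff pos by blast
  ultimately show ?thesis
    using argmax_estimator_consistent[OF iid C_range(1) r_range rhat_range rhat_argmax] by blast
qed

end
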